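(* Let $k$ be a field of characteristic different from $2$. The morphism $\Psi_1$ induces a morphism $\mathbb{G}_m\to S_2$. For $n\geq 2$, the morphism $\Psi_n$ induces a pointed morphism \[ \Psi_n: Q_{2n-1}\longrightarrow\begin{cases} O_{2^{n-1}} & n\equiv 0 \pmod 4,\\ S_{2^{n-1}}\cong (GL_{2^{n-1}}/O_{2^{n-1}})_{\text{\'et}} & n\equiv 1\pmod 4,\\ Sp_{2^{n-1}} & n\equiv 2\pmod 4,\\ A_{2^{n-1}}\cong GL_{2^{n-1}}/Sp_{2^{n-1}} & n\equiv 3\pmod 4.\end{cases} \]
   Context: $Q_{2n-1}=\operatorname{Spec} k[x_1,\dots,x_n,y_1,\dots,y_n]/(\sum_i x_iy_i-1)$, pointed by $x=y=(1,0,\dots,0)$. For $m\ge1$, $\tau_{2m}$ is the block sum of $m$ copies of $\begin{pmatrix}0&1\\0&0\end{pmatrix}$, $\sigma_{2m}=\tau_{2m}+\tau_{2m}^t$, $\psi_{2m}=\tau_{2m}-\tau_{2m}^t$; $O_{2m}$ is the orthogonal group of $\sigma_{2m}$ and $Sp_{2m}$ the symplectic group of $\psi_{2m}$ (pointed by the identity), $S_{2m}$ is the scheme of invertible symmetric $2m\times 2m$ matrices (pointed by $\sigma_{2m}$, with $S_{2m}\cong (GL_{2m}/O_{2m})_{\text{\'et}}$ via $g\mapsto g^t\sigma_{2m}g$), $A_{2m}$ the scheme of invertible antisymmetric matrices (pointed by $\psi_{2m}$, $A_{2m}\cong GL_{2m}/Sp_{2m}$ via $g\mapsto g^t\psi_{2m}g$).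 Suslin matrices: for a commutative ring $R$ and $a=(a_1,\dots,a_n)$, $b=(b_1,\dots,b_n)\in R^n$, $\alpha_1(a,b)=a_1$ and for $n\ge2$, $\alpha_n(a,b)=\begin{pmatrix}a_1\mathrm{Id}_{2^{n-2}}&\alpha_{n-1}(a',b')\\-\alpha_{n-1}(b',a')^t&b_1\mathrm{Id}_{2^{n-2}}\end{pmatrix}$ where $a'=(a_2,\dots,a_n)$, $b'=(b_2,\dots,b_n)$. Let $I_1=1$, $I_n=\begin{pmatrix}0&I_{n-1}\\-I_{n-1}&0\end{pmatrix}$ for $n$ even, $I_n=\begin{pmatrix}I_{n-1}&0\\0&-I_{n-1}\end{pmatrix}$ for $n\ge 3$ odd. Define $E_n\in M_{2^{n-1}}(\mathbb{Z})$ by $E_1=E_2=\mathrm{Id}$ and for $n\ge3$ (block matrices with blocks of size $2^{n-2}$, $1$ an identity block): if $n\equiv0\ (4)$: $E_n=\begin{pmatrix}1&0\\0&I_{n-1}^t\end{pmatrix}\begin{pmatrix}1&0\\\tau_{2^{n-2}}&1\end{pmatrix}\begin{pmatrix}1&-\sigma_{2^{n-2}}\\0&1\end{pmatrix}\begin{pmatrix}1&0\\0&\psi_{2^{n-2}}\end{pmatrix}$; if $n\equiv1\ (4)$: $E_n=\begin{pmatrix}E_{n-1}&0\\0&E_{n-1}\end{pmatrix}\begin{pmatrix}1&0\\0&\psi_{2^{n-2}}\end{pmatrix}$; if $n\equiv2\ (4)$: $E_n=\begin{pmatrix}1&0\\0&I_{n-1}^t\end{pmatrix}\begin{pmatrix}1&0\\\tau_{2^{n-2}}&1\end{pmatrix}\begin{pmatrix}1&\psi_{2^{n-2}}\\0&1\end{pmatrix}\begin{pmatrix}1&0\\0&\sigma_{2^{n-2}}\end{pmatrix}$;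 if $n\equiv3\ (4)$: $E_n=\begin{pmatrix}E_{n-1}&0\\0&E_{n-1}\end{pmatrix}\begin{pmatrix}1&0\\0&\sigma_{2^{n-2}}\end{pmatrix}$. Let $\alpha_n=\alpha_n(x,y)$ over $Q_{2n-1}$. Define $\Psi_1:\mathbb{G}_m\to GL_2$, $t\mapsto\mathrm{diag}(t,-1)$, and for $n\ge2$ the morphism $\Psi_n:Q_{2n-1}\to GL_{2^{n-1}}$ by $\Psi_n=E_n^{-1}\alpha_n^tE_n$ if $n$ is even and $\Psi_n=E_n^t\alpha_nI_nE_n$ if $n$ is odd. *)

theory Defs
  imports "Jordan_Normal_Form.Determinant"
begin

definition tau :: "nat \<Rightarrow> int mat" where
  "tau N = mat N N (\<lambda>(i,j). if even i \<and> j = Suc i then 1 else 0)"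

definition sigma :: "nat \<Rightarrow> int mat" where
  "sigma N = tau N + transpose_mat (tau N)"

definition psi :: "nat \<Rightarrow> int mat" where
  "psi N = tau N - transpose_mat (tau N)"

fun Imat :: "nat \<Rightarrow> int mat" where
  "Imat 0 = 1\<^sub>m 1"
| "Imat (Suc 0) = 1\<^sub>m 1"
| "Imat (Suc (Suc m)) =
     (if even (Suc (Suc m))
      then four_block_mat (0\<^sub>m (2^m) (2^m)) (Imat (Suc m)) (- Imat (Suc m)) (0\<^sub>m (2^m) (2^m))
      else four_block_mat (Imat (Suc m)) (0\<^sub>m (2^m) (2^m)) (0\<^sub>m (2^m) (2^m)) (- Imat (Suc m)))"

definition blk_diag :: "nat \<Rightarrow> int mat \<Rightarrow> int mat \<Rightarrow> int mat" where
  "blk_diag h A D = four_block_mat A (0\<^sub>m h h) (0\<^sub>m h h) D"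

definition blk_lower :: "nat \<Rightarrow> int mat \<Rightarrow> int mat" where
  "blk_lower h C = four_block_mat (1\<^sub>m h) (0\<^sub>m h h) C (1\<^sub>m h)"

definition blk_upper :: "nat \<Rightarrow> int mat \<Rightarrow> int mat" where
  "blk_upper h B = four_block_mat (1\<^sub>m h) B (0\<^sub>m h h) (1\<^sub>m h)"

fun Emat :: "nat \<Rightarrow> int mat" where
  "Emat 0 = 1\<^sub>m 1"
| "Emat (Suc 0) = 1\<^sub>m 1"
| "Emat (Suc (Suc 0)) = 1\<^sub>m 2"
| "Emat (Suc (Suc (Suc m))) =
     (let n = Suc (Suc (Suc m)); h = 2 ^ Suc m in
      if n mod 4 = 0 then
        blk_diag h (1\<^sub>m h) (transpose_mat (Imat (n - 1))) * blk_lower h (tau h)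
          * blk_upper h (- sigma h) * blk_diag h (1\<^sub>m h) (psi h)
      else if n mod 4 = 1 then
        blk_diag h (Emat (n - 1)) (Emat (n - 1)) * blk_diag h (1\<^sub>m h) (psi h)
      else if n mod 4 = 2 then
        blk_diag h (1\<^sub>m h) (transpose_mat (Imat (n - 1))) * blk_lower h (tau h)
          * blk_upper h (psi h) * blk_diag h (1\<^sub>m h) (sigma h)
      else
        blk_diag h (Emat (n - 1)) (Emat (n - 1)) * blk_diag h (1\<^sub>m h) (sigma h))"

text \<open>The (two-sided) inverse of an integer matrix (it exists for E_n).\<close>
definition int_mat_inv :: "nat \<Rightarrow> int mat \<Rightarrow> int mat" where
  "int_mat_inv N A = (THE B. B \<in> carrier_mat N N \<and> A * B = 1\<^sub>m N \<and> B * A = 1\<^sub>m N)"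

definition ofm :: "int mat \<Rightarrow> 'r::comm_ring_1 mat" where
  "ofm A = map_mat of_int A"

text \<open>Suslin matrices alpha_n(a,b); the vector (a_1,...,a_n) is a 0 ... a (n-1).\<close>
fun alpha :: "nat \<Rightarrow> (nat \<Rightarrow> 'r::comm_ring_1) \<Rightarrow> (nat \<Rightarrow> 'r) \<Rightarrow> 'r mat" where
  "alpha 0 a b = mat 1 1 (\<lambda>_. a 0)"
| "alpha (Suc 0) a b = mat 1 1 (\<lambda>_. a 0)"
| "alpha (Suc (Suc m)) a b =
     four_block_mat (a 0 \<cdot>\<^sub>m 1\<^sub>m (2^m)) (alpha (Suc m) (a \<circ> Suc) (b \<circ> Suc))
       (- transpose_mat (alpha (Suc m) (b \<circ> Suc) (a \<circ> Suc))) (b 0 \<cdot>\<^sub>m 1\<^sub>m (2^m))"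

definition Psi1 :: "'r::comm_ring_1 \<Rightarrow> 'r mat" where
  "Psi1 t = mat 2 2 (\<lambda>(i,j). if i = 0 \<and> j = 0 then t else if i = 1 \<and> j = 1 then -1 else 0)"

text \<open>Psi_n for n >= 2 on a point (x,y) of Q_{2n-1}.\<close>
definition Psi :: "nat \<Rightarrow> (nat \<Rightarrow> 'r::comm_ring_1) \<Rightarrow> (nat \<Rightarrow> 'r) \<Rightarrow> 'r mat" where
  "Psi n x y =
     (if even n then ofm (int_mat_inv (2^(n-1)) (Emat n)) * transpose_mat (alpha n x y) * ofm (Emat n)
      else transpose_mat (ofm (Emat n)) * alpha n x y * ofm (Imat n) * ofm (Emat n))"

text \<open>Base point of Q_{2n-1}: x = y = (1,0,...,0).\<close>
definition e1 :: "nat \<Rightarrow> 'r::comm_ring_1" where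
  "e1 i = (if i = 0 then 1 else 0)"

text \<open>R-points of the target schemes (N x N matrices).\<close>
definition in_GL :: "nat \<Rightarrow> 'r::comm_ring_1 mat \<Rightarrow> bool" where
  "in_GL N g \<longleftrightarrow> g \<in> carrier_mat N N \<and> det g dvd 1"

definition in_O :: "nat \<Rightarrow> 'r::comm_ring_1 mat \<Rightarrow> bool" where
  "in_O N g \<longleftrightarrow> in_GL N g \<and> transpose_mat g * ofm (sigma N) * g = ofm (sigma N)"

definition in_Sp :: "nat \<Rightarrow> 'r::comm_ring_1 mat \<Rightarrow> bool" where
  "in_Sp N g \<longleftrightarrow> in_GL N g \<and> transpose_mat g * ofm (psi N) * g = ofm (psi N)"

definition in_S :: "nat \<Rightarrow> 'r::comm_ring_1 mat \<Rightarrow> bool" where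
  "in_S N g \<longleftrightarrow> in_GL N g \<and> transpose_mat g = g"

definition in_A :: "nat \<Rightarrow> 'r::comm_ring_1 mat \<Rightarrow> bool" where
  "in_A N g \<longleftrightarrow> in_GL N g \<and> transpose_mat g = - g"

end

theory Submission
  imports Defs
begin

text \<open>Suslin's identity \<open>\<alpha>\<^sub>n(x,y) \<alpha>\<^sub>n(y,x)\<^sup>T = \<langle>x,y\<rangle>\<close> makes \<open>\<alpha>\<^sub>n\<close> invertible on
  \<open>Q\<^sub>2\<^sub>n\<^sub>-\<^sub>1\<close>, and the sign matrix \<open>I\<^sub>n\<close> intertwines the Suslin matrix with itself:
  \<open>I\<^sub>n\<^sup>T \<alpha>\<^sub>n(x,y) I\<^sub>n\<close> is \<open>\<alpha>\<^sub>n(y,x)\<close> for even \<open>n\<close> and \<open>\<alpha>\<^sub>n(x,y)\<^sup>T\<close> for odd \<open>n\<close>.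
  For even \<open>n\<close> this says that \<open>\<alpha>\<^sub>n\<^sup>T\<close> preserves the form \<open>I\<^sub>n\<close>; for odd \<open>n\<close> it says that
  \<open>\<alpha>\<^sub>n I\<^sub>n\<close> is symmetric or antisymmetric together with \<open>I\<^sub>n\<close>. The integral matrix \<open>E\<^sub>n\<close>,
  unimodular by construction, carries \<open>I\<^sub>n\<close> by congruence to \<open>\<sigma>\<close> (\<open>n \<equiv> 0,1 mod 4\<close>) or
  \<open>\<psi>\<close> (\<open>n \<equiv> 2,3 mod 4\<close>); this is checked block by block along the recursion defining
  \<open>E\<^sub>n\<close>. Conjugating by \<open>E\<^sub>n\<close> then gives the four cases. None of this uses the base field:
  the statement holds over every commutative ring.\<close>

section \<open>The signed permutation matrices \<open>\<sigma>\<close> and \<open>\<psi>\<close>\<close>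

text \<open>\<open>sigma h\<close> and \<open>psi h\<close> are the permutation matrices, unsigned and signed, of the
  involution \<open>2k \<leftrightarrow> 2k+1\<close>; all identities between them are checked entrywise from this.\<close>

definition pair_partner :: "nat \<Rightarrow> nat" where
  "pair_partner i = (if even i then Suc i else i - 1)"

definition pair_sign :: "nat \<Rightarrow> int" where
  "pair_sign i = (if even i then 1 else -1)"

lemma pair_partner_involution[simp]: "pair_partner (pair_partner i) = i"
  unfolding pair_partner_def by auto

lemma pair_sign_partner[simp]: "pair_sign (pair_partner i) = - pair_sign i"
  unfolding pair_partner_def pair_sign_def by auto

lemma even_pair_partner[simp]: "even (pair_partner i) \<longleftrightarrow> odd i"
  unfolding pair_partner_def by auto

lemma pair_partner_less: "even h \<Longrightarrow> i < h \<Longrightarrow> pair_partner i < h"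
  unfolding pair_partner_def by (auto, metis Suc_lessI even_Suc)

lemma pair_partner_eq_iff: "j = pair_partner i \<longleftrightarrow> i = pair_partner j"
  unfolding pair_partner_def by auto

lemma pair_partner_shift:
  assumes "even h" "h \<le> i" shows "pair_partner i = pair_partner (i - h) + h"
proof (cases "even i")
  case False
  hence "h < i" using assms by (metis le_neq_implies_less)
  thus ?thesis using assms False by (simp add: pair_partner_def)
qed (use assms in \<open>simp add: pair_partner_def\<close>)

lemma tau_carrier[simp]: "tau h \<in> carrier_mat h h"
  unfolding tau_def by auto

lemma sigma_carrier[simp]: "sigma h \<in> carrier_mat h h"
  unfolding sigma_def by auto

lemma psi_carrier[simp]: "psi h \<in> carrier_mat h h"
  unfolding psi_def by (rule minus_carrier_mat) auto

lemma dim_tau[simp]: "dim_row (tau h) = h" "dim_col (tau h) = h"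
  unfolding tau_def by auto

lemma dim_sigma[simp]: "dim_row (sigma h) = h" "dim_col (sigma h) = h"
  using sigma_carrier by (auto simp del: sigma_carrier)

lemma dim_psi[simp]: "dim_row (psi h) = h" "dim_col (psi h) = h"
  using psi_carrier by (auto simp del: psi_carrier)

lemma sigma_index:
  "i < h \<Longrightarrow> j < h \<Longrightarrow> sigma h $$ (i,j) = (if j = pair_partner i then 1 else 0)"
  unfolding sigma_def tau_def pair_partner_def by auto

lemma psi_index:
  "i < h \<Longrightarrow> j < h \<Longrightarrow> psi h $$ (i,j) = (if j = pair_partner i then pair_sign i else 0)"
  unfolding psi_def tau_def pair_partner_def pair_sign_def by auto

lemma signed_partner_mult_index:
  assumes h: "even h" and A: "A \<in> carrier_mat h h" and B: "B \<in> carrier_mat h m"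
    and A_index: "\<And>i k. i < h \<Longrightarrow> k < h \<Longrightarrow> A $$ (i,k) = (if k = pair_partner i then c i else 0)"
    and i: "i < h" and j: "j < m"
  shows "(A * B) $$ (i,j) = c i * B $$ (pair_partner i, j)"
proof -
  have "(A * B) $$ (i,j) = (\<Sum>k\<in>{0..<h}. A $$ (i,k) * B $$ (k,j))"
    using A B i j by (simp add: scalar_prod_def)
  also have "\<dots> = (\<Sum>k\<in>{0..<h}. if k = pair_partner i then c i * B $$ (k,j) else 0)"
    by (rule sum.cong) (auto simp: A_index i)
  also have "\<dots> = c i * B $$ (pair_partner i, j)"
    using pair_partner_less[OF h i] by simp
  finally show ?thesis .
qed

lemma sigma_mult_sigma: assumes h: "even h" shows "sigma h * sigma h = 1\<^sub>m h"
proof (rule eq_matI)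
  fix i j assume "i < dim_row (1\<^sub>m h :: int mat)" "j < dim_col (1\<^sub>m h :: int mat)"
  hence i: "i < h" and j: "j < h" by auto
  have "(sigma h * sigma h) $$ (i,j) = 1 * sigma h $$ (pair_partner i, j)"
    by (rule signed_partner_mult_index[OF h sigma_carrier sigma_carrier _ i j]) (simp add: sigma_index)
  also have "\<dots> = 1\<^sub>m h $$ (i,j)"
    using i j pair_partner_less[OF h i] by (auto simp: sigma_index pair_partner_eq_iff)
  finally show "(sigma h * sigma h) $$ (i,j) = 1\<^sub>m h $$ (i,j)" .
qed auto

lemma psi_mult_psi: assumes h: "even h" shows "psi h * psi h = - 1\<^sub>m h"
proof (rule eq_matI)
  fix i j assume "i < dim_row (- 1\<^sub>m h :: int mat)" "j < dim_col (- 1\<^sub>m h :: int mat)"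
  hence i: "i < h" and j: "j < h" by auto
  have "(psi h * psi h) $$ (i,j) = pair_sign i * psi h $$ (pair_partner i, j)"
    by (rule signed_partner_mult_index[OF h psi_carrier psi_carrier _ i j]) (simp add: psi_index)
  also have "\<dots> = (- 1\<^sub>m h) $$ (i,j)"
    using i j pair_partner_less[OF h i] by (auto simp: psi_index pair_partner_eq_iff pair_sign_def)
  finally show "(psi h * psi h) $$ (i,j) = (- 1\<^sub>m h) $$ (i,j)" .
qed auto

lemma transpose_sigma[simp]: "(sigma h)\<^sup>T = sigma h"
  by (rule eq_matI) (auto simp: sigma_index pair_partner_eq_iff)

lemma transpose_psi[simp]: "(psi h)\<^sup>T = - psi h"
  by (rule eq_matI) (auto simp: psi_index pair_partner_eq_iff)

lemma sigma_psi_sigma: assumes h: "even h" shows "sigma h * (psi h * sigma h) = - psi h"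
proof (rule eq_matI)
  fix i j assume "i < dim_row (- psi h)" "j < dim_col (- psi h)"
  hence i: "i < h" and j: "j < h" by auto
  have "(sigma h * (psi h * sigma h)) $$ (i,j) = 1 * (psi h * sigma h) $$ (pair_partner i, j)"
    by (rule signed_partner_mult_index[OF h sigma_carrier
          mult_carrier_mat[OF psi_carrier sigma_carrier] _ i j]) (simp add: sigma_index)
  also have "(psi h * sigma h) $$ (pair_partner i, j)
      = pair_sign (pair_partner i) * sigma h $$ (pair_partner (pair_partner i), j)"
    by (rule signed_partner_mult_index[OF h psi_carrier sigma_carrier _ pair_partner_less[OF h i] j])
      (simp add: psi_index)
  also have "1 * \<dots> = (- psi h) $$ (i,j)"
    using i j pair_partner_less[OF h i] by (auto simp: psi_index sigma_index pair_partner_eq_iff)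
  finally show "(sigma h * (psi h * sigma h)) $$ (i,j) = (- psi h) $$ (i,j)" .
qed auto

lemma psi_sigma_psi: assumes h: "even h" shows "psi h * (sigma h * psi h) = sigma h"
proof (rule eq_matI)
  fix i j assume "i < dim_row (sigma h)" "j < dim_col (sigma h)"
  hence i: "i < h" and j: "j < h" by auto
  have "(psi h * (sigma h * psi h)) $$ (i,j) = pair_sign i * (sigma h * psi h) $$ (pair_partner i, j)"
    by (rule signed_partner_mult_index[OF h psi_carrier
          mult_carrier_mat[OF sigma_carrier psi_carrier] _ i j]) (simp add: psi_index)
  also have "(sigma h * psi h) $$ (pair_partner i, j) = 1 * psi h $$ (pair_partner (pair_partner i), j)"
    by (rule signed_partner_mult_index[OF h sigma_carrier psi_carrier _ pair_partner_less[OF h i] j])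
      (simp add: sigma_index)
  also have "pair_sign i * \<dots> = sigma h $$ (i,j)"
    using i j pair_partner_less[OF h i] by (auto simp: psi_index sigma_index pair_partner_eq_iff pair_sign_def)
  finally show "(psi h * (sigma h * psi h)) $$ (i,j) = sigma h $$ (i,j)" .
qed auto

lemma sigma_double: assumes h: "even h"
  shows "sigma (h + h) = four_block_mat (sigma h) (0\<^sub>m h h) (0\<^sub>m h h) (sigma h)"
proof (rule eq_matI)
  fix i j assume "i < dim_row (four_block_mat (sigma h) (0\<^sub>m h h) (0\<^sub>m h h) (sigma h))"
    "j < dim_col (four_block_mat (sigma h) (0\<^sub>m h h) (0\<^sub>m h h) (sigma h))"
  hence i: "i < h + h" and j: "j < h + h" by auto
  show "sigma (h + h) $$ (i,j) = four_block_mat (sigma h) (0\<^sub>m h h) (0\<^sub>m h h) (sigma h) $$ (i,j)"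
  proof (cases "i < h")
    case True
    thus ?thesis using i j pair_partner_less[OF h True] by (auto simp: sigma_index)
  next
    case False
    thus ?thesis using i j pair_partner_shift[OF h, of i] by (auto simp: sigma_index)
  qed
qed auto

lemma psi_double: assumes h: "even h"
  shows "psi (h + h) = four_block_mat (psi h) (0\<^sub>m h h) (0\<^sub>m h h) (psi h)"
proof (rule eq_matI)
  fix i j assume "i < dim_row (four_block_mat (psi h) (0\<^sub>m h h) (0\<^sub>m h h) (psi h))"
    "j < dim_col (four_block_mat (psi h) (0\<^sub>m h h) (0\<^sub>m h h) (psi h))"
  hence i: "i < h + h" and j: "j < h + h" by auto
  show "psi (h + h) $$ (i,j) = four_block_mat (psi h) (0\<^sub>m h h) (0\<^sub>m h h) (psi h) $$ (i,j)"
  proof (cases "i < h")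
    case True
    thus ?thesis using i j pair_partner_less[OF h True] by (auto simp: psi_index)
  next
    case False
    moreover have "pair_sign i = pair_sign (i - h)" using False h by (auto simp: pair_sign_def)
    ultimately show ?thesis using i j pair_partner_shift[OF h, of i] by (auto simp: psi_index)
  qed
qed auto

section \<open>Block matrices and congruence\<close>

lemma mult_four_block_square:
  assumes "A1 \<in> carrier_mat h h" "B1 \<in> carrier_mat h h" "C1 \<in> carrier_mat h h" "D1 \<in> carrier_mat h h"
    "A2 \<in> carrier_mat h h" "B2 \<in> carrier_mat h h" "C2 \<in> carrier_mat h h" "D2 \<in> carrier_mat h h"
  shows "four_block_mat A1 B1 C1 D1 * four_block_mat A2 B2 C2 D2
    = four_block_mat (A1 * A2 + B1 * C2) (A1 * B2 + B1 * D2) (C1 * A2 + D1 * C2) (C1 * B2 + D1 * D2)"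
  by (rule mult_four_block_mat) (use assms in auto)

lemma transpose_four_block_square:
  assumes "A \<in> carrier_mat h h" "B \<in> carrier_mat h h" "C \<in> carrier_mat h h" "D \<in> carrier_mat h h"
  shows "(four_block_mat A B C D)\<^sup>T = four_block_mat A\<^sup>T C\<^sup>T B\<^sup>T D\<^sup>T"
  by (rule transpose_four_block_mat) (use assms in auto)

lemma uminus_zero_mat[simp]: "- (0\<^sub>m n m :: 'a::group_add mat) = 0\<^sub>m n m"
  by (rule eq_matI) auto

lemma uminus_four_block_square:
  assumes "A \<in> carrier_mat h h" "B \<in> carrier_mat h h" "C \<in> carrier_mat h h" "D \<in> carrier_mat h h"
  shows "- four_block_mat A B C D = four_block_mat (- A) (- B) (- C) (- D)"
  by (rule eq_matI) (use assms in auto)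

lemma smult_one_mat_mult: "A \<in> carrier_mat h k \<Longrightarrow> (c \<cdot>\<^sub>m 1\<^sub>m h) * A = (c::'a::comm_ring_1) \<cdot>\<^sub>m A"
  by (subst mult_smult_assoc_mat[of _ h h]) auto

lemma mult_smult_one_mat: "A \<in> carrier_mat k h \<Longrightarrow> A * (c \<cdot>\<^sub>m 1\<^sub>m h) = (c::'a::comm_ring_1) \<cdot>\<^sub>m A"
  by (subst mult_smult_distrib[of _ k h]) auto

lemma transpose_smult_one_mat[simp]: "(c \<cdot>\<^sub>m 1\<^sub>m h)\<^sup>T = c \<cdot>\<^sub>m 1\<^sub>m h"
  by (rule eq_matI) auto

lemma one_smult_mat[simp]: "(1::'a::semiring_1) \<cdot>\<^sub>m A = A"
  by (rule eq_matI) auto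

lemma one_add_uminus_one_mat[simp]: "1\<^sub>m n + - 1\<^sub>m n = (0\<^sub>m n n :: 'a::ring_1 mat)"
  by (rule eq_matI) auto

lemma minus_one_smult_mat[simp]: "(- 1::'a::ring_1) \<cdot>\<^sub>m A = - A"
  by (rule eq_matI) auto

definition mat_congr :: "'a::comm_ring_1 mat \<Rightarrow> 'a mat \<Rightarrow> 'a mat" where
  "mat_congr P X = P\<^sup>T * (X * P)"

lemma mat_congr_carrier[simp]:
  "P \<in> carrier_mat n n \<Longrightarrow> X \<in> carrier_mat n n \<Longrightarrow> mat_congr P X \<in> carrier_mat n n"
  unfolding mat_congr_def by auto

lemma mat_congr_assoc: "P \<in> carrier_mat n n \<Longrightarrow> X \<in> carrier_mat n n \<Longrightarrow> P\<^sup>T * X * P = mat_congr P X"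
  unfolding mat_congr_def by (simp add: assoc_mult_mat[of _ n n _ n _ n])

lemma mat_congr_one[simp]: "X \<in> carrier_mat n n \<Longrightarrow> mat_congr (1\<^sub>m n) X = X"
  unfolding mat_congr_def by simp

lemma mat_congr_mult:
  assumes "P \<in> carrier_mat n n" "Q \<in> carrier_mat n n" "X \<in> carrier_mat n n"
  shows "mat_congr (P * Q) X = mat_congr Q (mat_congr P X)"
  unfolding mat_congr_def using assms
  by (simp add: transpose_mult[of _ n n] assoc_mult_mat[of _ n n _ n _ n])

lemma mat_congr_mult4:
  assumes "P1 \<in> carrier_mat n n" "P2 \<in> carrier_mat n n" "P3 \<in> carrier_mat n n" "P4 \<in> carrier_mat n n"
    "X \<in> carrier_mat n n"
  shows "mat_congr (P1 * P2 * P3 * P4) X = mat_congr P4 (mat_congr P3 (mat_congr P2 (mat_congr P1 X)))"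
  using assms by (simp add: mat_congr_mult[of _ n])

lemma mat_congr_transpose:
  assumes J: "J \<in> carrier_mat n n" and X: "X \<in> carrier_mat n n"
  shows "mat_congr J X\<^sup>T = (mat_congr J X)\<^sup>T"
proof -
  have "(J\<^sup>T * (X * J))\<^sup>T = (X * J)\<^sup>T * J"
    using J X by (subst transpose_mult[of _ n n _ n]) auto
  also have "(X * J)\<^sup>T = J\<^sup>T * X\<^sup>T"
    using X J by (rule transpose_mult)
  also have "J\<^sup>T * X\<^sup>T * J = J\<^sup>T * (X\<^sup>T * J)"
    using J X by (auto intro: assoc_mult_mat)
  finally show ?thesis unfolding mat_congr_def by (rule sym)
qed

lemma mat_congr_uminus:
  "J \<in> carrier_mat n n \<Longrightarrow> X \<in> carrier_mat n n \<Longrightarrow> mat_congr J (- X) = - mat_congr J X"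
  unfolding mat_congr_def by simp

lemma mat_congr_smult:
  "P \<in> carrier_mat n n \<Longrightarrow> X \<in> carrier_mat n n \<Longrightarrow> mat_congr P (c \<cdot>\<^sub>m X) = c \<cdot>\<^sub>m mat_congr P X"
  unfolding mat_congr_def
  using mult_smult_assoc_mat[of X n n P n c] mult_smult_distrib[of "P\<^sup>T" n n "X * P" n c] by simp

lemma mat_congr_smult_one:
  assumes J: "J \<in> carrier_mat n n" and JJ: "J\<^sup>T * J = 1\<^sub>m n"
  shows "mat_congr J (c \<cdot>\<^sub>m 1\<^sub>m n) = c \<cdot>\<^sub>m 1\<^sub>m n"
  unfolding mat_congr_def using J JJ
  by (simp add: smult_one_mat_mult[OF J] mult_smult_distrib[of _ n n])

lemma mat_congr_four_block_diag:
  assumes c: "A \<in> carrier_mat h h" "D \<in> carrier_mat h h"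
    "P \<in> carrier_mat h h" "Q \<in> carrier_mat h h" "R \<in> carrier_mat h h" "S \<in> carrier_mat h h"
  shows "mat_congr (four_block_mat A (0\<^sub>m h h) (0\<^sub>m h h) D) (four_block_mat P Q R S)
    = four_block_mat (mat_congr A P) (A\<^sup>T * (Q * D)) (D\<^sup>T * (R * A)) (mat_congr D S)"
proof -
  have "four_block_mat P Q R S * four_block_mat A (0\<^sub>m h h) (0\<^sub>m h h) D
      = four_block_mat (P * A) (Q * D) (R * A) (S * D)"
    using c by (simp add: mult_four_block_square[of _ h])
  moreover have "(four_block_mat A (0\<^sub>m h h) (0\<^sub>m h h) D)\<^sup>T = four_block_mat A\<^sup>T (0\<^sub>m h h) (0\<^sub>m h h) D\<^sup>T"
    using c by (simp add: transpose_four_block_square[of _ h])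
  ultimately show ?thesis
    unfolding mat_congr_def using c by (simp add: mult_four_block_square[of _ h])
qed

lemma mat_congr_four_block_diag_uminus:
  assumes c: "J \<in> carrier_mat h h"
    "P \<in> carrier_mat h h" "Q \<in> carrier_mat h h" "R \<in> carrier_mat h h" "S \<in> carrier_mat h h"
  shows "mat_congr (four_block_mat J (0\<^sub>m h h) (0\<^sub>m h h) (- J)) (four_block_mat P Q R S)
    = four_block_mat (mat_congr J P) (- mat_congr J Q) (- mat_congr J R) (mat_congr J S)"
  using c by (simp add: mat_congr_four_block_diag) (simp add: mat_congr_def transpose_uminus)

lemma mat_congr_four_block_antidiag:
  assumes c: "J \<in> carrier_mat h h"
    "P \<in> carrier_mat h h" "Q \<in> carrier_mat h h" "R \<in> carrier_mat h h" "S \<in> carrier_mat h h"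
  shows "mat_congr (four_block_mat (0\<^sub>m h h) J (- J) (0\<^sub>m h h)) (four_block_mat P Q R S)
    = four_block_mat (mat_congr J S) (- mat_congr J R) (- mat_congr J Q) (mat_congr J P)"
proof -
  have "four_block_mat P Q R S * four_block_mat (0\<^sub>m h h) J (- J) (0\<^sub>m h h)
      = four_block_mat (- (Q * J)) (P * J) (- (S * J)) (R * J)"
    using c by (simp add: mult_four_block_square[of _ h])
  moreover have "(four_block_mat (0\<^sub>m h h) J (- J) (0\<^sub>m h h))\<^sup>T
      = four_block_mat (0\<^sub>m h h) (- J\<^sup>T) J\<^sup>T (0\<^sub>m h h)"
    using c by (simp add: transpose_four_block_square[of _ h] transpose_uminus)
  ultimately show ?thesis
    unfolding mat_congr_def using c by (simp add: mult_four_block_square[of _ h])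
qed

lemma mat_congr_four_block_lower:
  assumes c: "T \<in> carrier_mat h h" "C \<in> carrier_mat h h"
  shows "mat_congr (four_block_mat (1\<^sub>m h) (0\<^sub>m h h) T (1\<^sub>m h)) (four_block_mat (0\<^sub>m h h) (1\<^sub>m h) C (0\<^sub>m h h))
    = four_block_mat (T + T\<^sup>T * C) (1\<^sub>m h) C (0\<^sub>m h h)"
proof -
  have "four_block_mat (0\<^sub>m h h) (1\<^sub>m h) C (0\<^sub>m h h) * four_block_mat (1\<^sub>m h) (0\<^sub>m h h) T (1\<^sub>m h)
      = four_block_mat T (1\<^sub>m h) C (0\<^sub>m h h)"
    using c by (simp add: mult_four_block_square[of _ h])
  moreover have "(four_block_mat (1\<^sub>m h) (0\<^sub>m h h) T (1\<^sub>m h))\<^sup>T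
      = four_block_mat (1\<^sub>m h) T\<^sup>T (0\<^sub>m h h) (1\<^sub>m h)"
    using c by (simp add: transpose_four_block_square[of _ h])
  ultimately show ?thesis
    unfolding mat_congr_def using c by (simp add: mult_four_block_square[of _ h])
qed

lemma mat_congr_four_block_upper:
  assumes c: "Y \<in> carrier_mat h h" "Q \<in> carrier_mat h h" "C \<in> carrier_mat h h"
  shows "mat_congr (four_block_mat (1\<^sub>m h) Y (0\<^sub>m h h) (1\<^sub>m h)) (four_block_mat Q (1\<^sub>m h) C (0\<^sub>m h h))
    = four_block_mat Q (Q * Y + 1\<^sub>m h) (Y\<^sup>T * Q + C) (Y\<^sup>T * (Q * Y + 1\<^sub>m h) + C * Y)"
proof -
  have "four_block_mat Q (1\<^sub>m h) C (0\<^sub>m h h) * four_block_mat (1\<^sub>m h) Y (0\<^sub>m h h) (1\<^sub>m h)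
      = four_block_mat Q (Q * Y + 1\<^sub>m h) C (C * Y)"
    using c by (simp add: mult_four_block_square[of _ h])
  moreover have "(four_block_mat (1\<^sub>m h) Y (0\<^sub>m h h) (1\<^sub>m h))\<^sup>T
      = four_block_mat (1\<^sub>m h) (0\<^sub>m h h) Y\<^sup>T (1\<^sub>m h)"
    using c by (simp add: transpose_four_block_square[of _ h])
  ultimately show ?thesis
    unfolding mat_congr_def using c by (simp add: mult_four_block_square[of _ h])
qed

lemma ofm_carrier_iff[simp]: "ofm A \<in> carrier_mat n m \<longleftrightarrow> A \<in> carrier_mat n m"
  unfolding ofm_def by simp

lemma ofm_uminus[simp]: "ofm (- A) = - ofm A"
  unfolding ofm_def by (rule eq_matI) auto

lemma ofm_zero[simp]: "ofm (0\<^sub>m n m) = 0\<^sub>m n m"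
  unfolding ofm_def by (rule eq_matI) auto

lemma ofm_one[simp]: "ofm (1\<^sub>m n) = 1\<^sub>m n"
  unfolding ofm_def by (rule eq_matI) auto

lemma ofm_transpose: "ofm A\<^sup>T = (ofm A)\<^sup>T"
  unfolding ofm_def by (rule eq_matI) auto

lemma ofm_mult: "A \<in> carrier_mat n k \<Longrightarrow> B \<in> carrier_mat k m \<Longrightarrow> ofm (A * B) = ofm A * ofm B"
  unfolding ofm_def by (rule of_int_hom.mat_hom_mult)

lemma ofm_four_block_square:
  "A \<in> carrier_mat h h \<Longrightarrow> B \<in> carrier_mat h h \<Longrightarrow> C \<in> carrier_mat h h \<Longrightarrow> D \<in> carrier_mat h h \<Longrightarrow>
    ofm (four_block_mat A B C D) = four_block_mat (ofm A) (ofm B) (ofm C) (ofm D)"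
  unfolding ofm_def by (rule map_four_block_mat)

lemma ofm_mat_congr:
  assumes "P \<in> carrier_mat n n" "X \<in> carrier_mat n n"
  shows "ofm (mat_congr P X) = mat_congr (ofm P) (ofm X)"
proof -
  have "ofm (P\<^sup>T * (X * P)) = ofm P\<^sup>T * ofm (X * P)"
    using assms by (intro ofm_mult[of _ n n]) auto
  also have "ofm (X * P) = ofm X * ofm P"
    using assms by (intro ofm_mult[of _ n n]) auto
  finally show ?thesis unfolding mat_congr_def ofm_transpose .
qed

lemma det_ofm: "det (ofm A) = of_int (det A)"
  unfolding ofm_def by (rule of_int_hom.hom_det)

lemma det_ofm_unit: "det A dvd 1 \<Longrightarrow> det (ofm A :: 'a::comm_ring_1 mat) dvd 1"
  unfolding det_ofm by (metis dvdE dvd_triv_left of_int_1 of_int_mult)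

section \<open>The sign matrices \<open>I\<^sub>n\<close>\<close>

lemma two_power_Suc: "(2::nat) ^ Suc m = 2 ^ m + 2 ^ m"
  by simp

lemma Imat_carrier: "Imat n \<in> carrier_mat (2^(n-1)) (2^(n-1))"
proof (induction n rule: Imat.induct)
  case (3 m)
  thus ?case by (simp only: Imat.simps diff_Suc_1 two_power_Suc) (auto simp del: Imat.simps)
qed auto

lemma dim_Imat[simp]: "dim_row (Imat n) = 2^(n-1)" "dim_col (Imat n) = 2^(n-1)"
  using Imat_carrier[of n] by auto

lemma Imat_mult_transpose: "Imat n * (Imat n)\<^sup>T = 1\<^sub>m (2^(n-1))"
proof (induction n rule: Imat.induct)
  case (3 m)
  define h where "h = (2::nat)^m"
  define A where "A = Imat (Suc m)"
  have A: "A \<in> carrier_mat h h" using Imat_carrier[of "Suc m"] by (simp add: A_def h_def)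
  have AA: "A * A\<^sup>T = 1\<^sub>m h" using 3 by (cases "even m") (simp_all add: A_def h_def)
  have "Imat (Suc (Suc m)) * (Imat (Suc (Suc m)))\<^sup>T
      = four_block_mat (1\<^sub>m h) (0\<^sub>m h h) (0\<^sub>m h h) (1\<^sub>m h)"
    using A AA by (cases "even m") (simp_all add: A_def[symmetric] h_def[symmetric]
        transpose_four_block_square[of _ h] transpose_uminus mult_four_block_square[of _ h])
  thus ?case by (simp add: h_def mult_2)
qed auto

lemma transpose_Imat:
  "(Imat n)\<^sup>T = (if n mod 4 = 0 \<or> n mod 4 = 1 then Imat n else - Imat n)"
proof (induction n rule: Imat.induct)
  case (3 m)
  define h where "h = (2::nat)^m"
  define A where "A = Imat (Suc m)"
  have A: "A \<in> carrier_mat h h" using Imat_carrier[of "Suc m"] by (simp add: A_def h_def)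
  have IH: "A\<^sup>T = (if Suc m mod 4 = 0 \<or> Suc m mod 4 = 1 then A else - A)"
    using 3 by (cases "even m") (simp_all add: A_def)
  consider "even m" "Suc m mod 4 = 3" "Suc (Suc m) mod 4 = 0"
    | "even m" "Suc m mod 4 = 1" "Suc (Suc m) mod 4 = 2"
    | "odd m" "Suc m mod 4 = 0" "Suc (Suc m) mod 4 = 1"
    | "odd m" "Suc m mod 4 = 2" "Suc (Suc m) mod 4 = 3"
    by atomize_elim presburger
  thus ?case
    by cases (use A IH in \<open>simp_all add: A_def[symmetric] h_def[symmetric]
        transpose_four_block_square[of _ h] transpose_uminus uminus_four_block_square[of _ h]\<close>)
qed auto

lemma transpose_Imat_mult: "(Imat n)\<^sup>T * Imat n = 1\<^sub>m (2^(n-1))"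
  using Imat_mult_transpose[of n] by (cases "n mod 4 = 0 \<or> n mod 4 = 1") (simp_all add: transpose_Imat)

lemma ofm_Imat_mult_transpose: "ofm (Imat n) * (ofm (Imat n))\<^sup>T = 1\<^sub>m (2^(n-1))"
  using Imat_mult_transpose[of n] Imat_carrier[of n]
  by (metis ofm_one ofm_mult ofm_transpose carrier_matI index_transpose_mat(2,3))

lemma ofm_transpose_Imat_mult: "(ofm (Imat n))\<^sup>T * ofm (Imat n) = 1\<^sub>m (2^(n-1))"
  using transpose_Imat_mult[of n] Imat_carrier[of n]
  by (metis ofm_one ofm_mult ofm_transpose carrier_matI index_transpose_mat(3))

section \<open>Suslin matrices\<close>

lemma alpha_carrier: "alpha n a b \<in> carrier_mat (2^(n-1)) (2^(n-1))"
proof (induction n a b rule: alpha.induct)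
  case (3 m a b)
  thus ?case by (simp only: alpha.simps diff_Suc_1 two_power_Suc) auto
qed auto

lemma four_block_scalar_mult:
  fixes A B :: "'a::comm_ring_1 mat"
  assumes A: "A \<in> carrier_mat h h" and B: "B \<in> carrier_mat h h"
    and AB: "A * B\<^sup>T = d \<cdot>\<^sub>m 1\<^sub>m h" "B\<^sup>T * A = d \<cdot>\<^sub>m 1\<^sub>m h"
  shows "four_block_mat (a \<cdot>\<^sub>m 1\<^sub>m h) A (- B\<^sup>T) (b \<cdot>\<^sub>m 1\<^sub>m h) *
      four_block_mat (b \<cdot>\<^sub>m 1\<^sub>m h) (- A) B\<^sup>T (a \<cdot>\<^sub>m 1\<^sub>m h) = (a * b + d) \<cdot>\<^sub>m 1\<^sub>m (h + h)"
    and "four_block_mat (b \<cdot>\<^sub>m 1\<^sub>m h) (- A) B\<^sup>T (a \<cdot>\<^sub>m 1\<^sub>m h) *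
      four_block_mat (a \<cdot>\<^sub>m 1\<^sub>m h) A (- B\<^sup>T) (b \<cdot>\<^sub>m 1\<^sub>m h) = (a * b + d) \<cdot>\<^sub>m 1\<^sub>m (h + h)"
proof -
  have BT: "B\<^sup>T \<in> carrier_mat h h" using B by simp
  have scalar: "(a \<cdot>\<^sub>m 1\<^sub>m h) * (b \<cdot>\<^sub>m 1\<^sub>m h) = (a * b) \<cdot>\<^sub>m 1\<^sub>m h"
    "(b \<cdot>\<^sub>m 1\<^sub>m h) * (a \<cdot>\<^sub>m 1\<^sub>m h) = (a * b) \<cdot>\<^sub>m 1\<^sub>m h"
    by (rule eq_matI; auto simp: smult_one_mat_mult[of _ h h])+
  show "four_block_mat (a \<cdot>\<^sub>m 1\<^sub>m h) A (- B\<^sup>T) (b \<cdot>\<^sub>m 1\<^sub>m h) *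
      four_block_mat (b \<cdot>\<^sub>m 1\<^sub>m h) (- A) B\<^sup>T (a \<cdot>\<^sub>m 1\<^sub>m h) = (a * b + d) \<cdot>\<^sub>m 1\<^sub>m (h + h)"
    using A BT by (simp add: mult_four_block_square[of _ h] smult_one_mat_mult mult_smult_one_mat scalar AB)
      (rule eq_matI, auto simp: algebra_simps)
  show "four_block_mat (b \<cdot>\<^sub>m 1\<^sub>m h) (- A) B\<^sup>T (a \<cdot>\<^sub>m 1\<^sub>m h) *
      four_block_mat (a \<cdot>\<^sub>m 1\<^sub>m h) A (- B\<^sup>T) (b \<cdot>\<^sub>m 1\<^sub>m h) = (a * b + d) \<cdot>\<^sub>m 1\<^sub>m (h + h)"
    using A BT by (simp add: mult_four_block_square[of _ h] smult_one_mat_mult mult_smult_one_mat scalar AB)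
      (rule eq_matI, auto simp: algebra_simps)
qed

lemma suslin_identity:
  "alpha (Suc m) a b * (alpha (Suc m) b a)\<^sup>T = (\<Sum>i<Suc m. a i * b i) \<cdot>\<^sub>m 1\<^sub>m (2^m)
   \<and> (alpha (Suc m) b a)\<^sup>T * alpha (Suc m) a b = (\<Sum>i<Suc m. a i * b i) \<cdot>\<^sub>m 1\<^sub>m (2^m)"
proof (induction m arbitrary: a b)
  case 0
  show ?case by (intro conjI; rule eq_matI; simp add: scalar_prod_def)
next
  case (Suc m)
  define A where "A = alpha (Suc m) (a \<circ> Suc) (b \<circ> Suc)"
  define B where "B = alpha (Suc m) (b \<circ> Suc) (a \<circ> Suc)"
  define d where "d = (\<Sum>i<Suc m. (a \<circ> Suc) i * (b \<circ> Suc) i)"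
  have A: "A \<in> carrier_mat (2^m) (2^m)" unfolding A_def using alpha_carrier[of "Suc m"] by simp
  have B: "B \<in> carrier_mat (2^m) (2^m)" unfolding B_def using alpha_carrier[of "Suc m"] by simp
  have AB: "A * B\<^sup>T = d \<cdot>\<^sub>m 1\<^sub>m (2^m)" "B\<^sup>T * A = d \<cdot>\<^sub>m 1\<^sub>m (2^m)"
    unfolding A_def B_def d_def using Suc.IH by blast+
  have sum: "(\<Sum>i<Suc (Suc m). a i * b i) = a 0 * b 0 + d"
    unfolding d_def by (subst sum.lessThan_Suc_shift) simp
  have "(alpha (Suc (Suc m)) b a)\<^sup>T
      = four_block_mat (b 0 \<cdot>\<^sub>m 1\<^sub>m (2^m)) (- A) B\<^sup>T (a 0 \<cdot>\<^sub>m 1\<^sub>m (2^m))"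
    using A B by (simp add: A_def B_def transpose_four_block_square[of _ "2^m"] transpose_uminus)
  moreover have "alpha (Suc (Suc m)) a b
      = four_block_mat (a 0 \<cdot>\<^sub>m 1\<^sub>m (2^m)) A (- B\<^sup>T) (b 0 \<cdot>\<^sub>m 1\<^sub>m (2^m))"
    unfolding A_def B_def by simp
  ultimately show ?case
    unfolding sum two_power_Suc using four_block_scalar_mult[OF A B AB] by simp
qed

lemma alpha_swap_mult_transpose:
  assumes "(\<Sum>i<n. x i * y i) = 1" "n \<noteq> 0"
  shows "alpha n y x * (alpha n x y)\<^sup>T = 1\<^sub>m (2^(n-1))"
proof -
  obtain m where n: "n = Suc m" using assms(2) not0_implies_Suc by blast
  have "(\<Sum>i<n. y i * x i) = 1" using assms(1) by (simp add: mult.commute)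
  thus ?thesis using suslin_identity[of m y x] by (simp add: n)
qed

lemma alpha_mat_congr_Imat:
  "mat_congr (ofm (Imat (Suc m))) (alpha (Suc m) a b)
    = (if even (Suc m) then alpha (Suc m) b a else (alpha (Suc m) a b)\<^sup>T)"
proof (induction m arbitrary: a b)
  case 0
  show ?case by (rule eq_matI) (auto simp: ofm_def mat_congr_def scalar_prod_def)
next
  case (Suc m)
  define h where "h = (2::nat)^m"
  define A where "A = alpha (Suc m) (a \<circ> Suc) (b \<circ> Suc)"
  define B where "B = alpha (Suc m) (b \<circ> Suc) (a \<circ> Suc)"
  define J where "J = (ofm (Imat (Suc m)) :: 'a mat)"
  have A: "A \<in> carrier_mat h h" and B: "B \<in> carrier_mat h h" and J: "J \<in> carrier_mat h h"
    unfolding A_def B_def J_def h_def using alpha_carrier[of "Suc m"] Imat_carrier[of "Suc m"] by simp_all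
  have JJ: "J\<^sup>T * J = 1\<^sub>m h" unfolding J_def h_def using ofm_transpose_Imat_mult[of "Suc m"] by simp
  have IH_A: "mat_congr J A = (if even (Suc m) then B else A\<^sup>T)"
    and IH_B: "mat_congr J B = (if even (Suc m) then A else B\<^sup>T)"
    unfolding A_def B_def J_def by (rule Suc.IH)+
  have alpha_ab: "alpha (Suc (Suc m)) a b = four_block_mat (a 0 \<cdot>\<^sub>m 1\<^sub>m h) A (- B\<^sup>T) (b 0 \<cdot>\<^sub>m 1\<^sub>m h)"
    and alpha_ba: "alpha (Suc (Suc m)) b a = four_block_mat (b 0 \<cdot>\<^sub>m 1\<^sub>m h) B (- A\<^sup>T) (a 0 \<cdot>\<^sub>m 1\<^sub>m h)"
    unfolding A_def B_def h_def by simp_all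
  show ?case
  proof (cases "even m")
    case True
    have I: "ofm (Imat (Suc (Suc m))) = four_block_mat (0\<^sub>m h h) J (- J) (0\<^sub>m h h)"
      using True J Imat_carrier[of "Suc m"]
      by (simp add: J_def h_def ofm_four_block_square[of _ "2^m"])
    have "mat_congr J A = A\<^sup>T" "mat_congr J B\<^sup>T = B"
      using True IH_A IH_B mat_congr_transpose[OF J B] by simp_all
    thus ?thesis unfolding I alpha_ab alpha_ba
      using True A B J by (simp add: mat_congr_four_block_antidiag[of _ h]
          mat_congr_uminus[of _ h] mat_congr_smult_one[OF J JJ])
  next
    case False
    have I: "ofm (Imat (Suc (Suc m))) = four_block_mat J (0\<^sub>m h h) (0\<^sub>m h h) (- J)"
      using False J Imat_carrier[of "Suc m"]
      by (simp add: J_def h_def ofm_four_block_square[of _ "2^m"])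
    have "mat_congr J A = B" "mat_congr J B\<^sup>T = A\<^sup>T"
      using False IH_A IH_B mat_congr_transpose[OF J B] by simp_all
    thus ?thesis unfolding I alpha_ab
      using False A B J by (simp add: mat_congr_four_block_diag_uminus[of _ h]
          mat_congr_uminus[of _ h] mat_congr_smult_one[OF J JJ] transpose_four_block_square[of _ h]
          transpose_uminus)
  qed
qed

lemma alpha_zero: "alpha (Suc m) (\<lambda>_. 0) (\<lambda>_. 0) = (0\<^sub>m (2^m) (2^m) :: 'a::comm_ring_1 mat)"
proof (induction m)
  case (Suc m)
  have "(\<lambda>_. 0 :: 'a) \<circ> Suc = (\<lambda>_. 0)" by auto
  thus ?case using Suc by (simp del: alpha.simps(3)) (rule eq_matI, auto)
qed (rule eq_matI, auto)

lemma alpha_e1: "alpha (Suc m) e1 e1 = (1\<^sub>m (2^m) :: 'a::comm_ring_1 mat)"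
proof (cases m)
  case (Suc k)
  have shift: "(e1 :: nat \<Rightarrow> 'a) \<circ> Suc = (\<lambda>_. 0)" by (auto simp: e1_def)
  show ?thesis unfolding Suc alpha.simps(3) shift alpha_zero by (rule eq_matI) (auto simp: e1_def)
qed (rule eq_matI, auto simp: e1_def)

lemma alpha_n_e1: "n \<noteq> 0 \<Longrightarrow> alpha n e1 e1 = (1\<^sub>m (2^(n-1)) :: 'a::comm_ring_1 mat)"
  using alpha_e1[of "n - 1", where 'a='a] by simp

section \<open>Unimodularity of \<open>E\<^sub>n\<close>\<close>

lemma in_GL_mult: "in_GL N A \<Longrightarrow> in_GL N B \<Longrightarrow> in_GL N (A * B)"
  unfolding in_GL_def by (auto simp: det_mult)

lemma in_GL_one: "in_GL N (1\<^sub>m N)"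
  unfolding in_GL_def by simp

lemma in_GL_transpose: "in_GL N A \<Longrightarrow> in_GL N A\<^sup>T"
  unfolding in_GL_def by (auto simp: det_transpose)

lemma in_GL_ofm: "in_GL N A \<Longrightarrow> in_GL N (ofm A)"
  unfolding in_GL_def by (simp add: det_ofm_unit)

lemma in_GL_if_mult_eq_one:
  assumes "A \<in> carrier_mat N N" "B \<in> carrier_mat N N" "A * B = 1\<^sub>m N"
  shows "in_GL N A" "in_GL N B"
  using assms det_mult[of A N B] unfolding in_GL_def by (metis det_one dvd_triv_left, metis det_one dvd_triv_right)

lemma in_GL_sigma: "even h \<Longrightarrow> in_GL h (sigma h)"
  using in_GL_if_mult_eq_one(1)[OF _ _ sigma_mult_sigma] by simp

lemma in_GL_psi: "even h \<Longrightarrow> in_GL h (psi h)"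
  using in_GL_if_mult_eq_one(1)[of "psi h" h "- psi h"] psi_mult_psi by simp

lemma in_GL_Imat: "in_GL (2^(n-1)) (Imat n)"
  using in_GL_if_mult_eq_one(1)[OF Imat_carrier _ Imat_mult_transpose] Imat_carrier[of n] by simp

lemma in_GL_alpha:
  assumes "(\<Sum>i<n. x i * y i) = 1" "n \<noteq> 0"
  shows "in_GL (2^(n-1)) (alpha n x y)"
proof -
  have "in_GL (2^(n-1)) (alpha n x y)\<^sup>T"
    by (rule in_GL_if_mult_eq_one(2)[OF alpha_carrier _ alpha_swap_mult_transpose[OF assms]])
      (simp only: transpose_carrier_mat alpha_carrier)
  thus ?thesis using in_GL_transpose by fastforce
qed

lemma in_GL_blk_diag: "in_GL h A \<Longrightarrow> in_GL h D \<Longrightarrow> in_GL (h + h) (blk_diag h A D)"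
  unfolding in_GL_def blk_diag_def by (simp add: det_four_block_mat_lower_left_zero[of _ h _ h] abs_mult)

lemma in_GL_blk_lower: "C \<in> carrier_mat h h \<Longrightarrow> in_GL (h + h) (blk_lower h C)"
  unfolding in_GL_def blk_lower_def by (simp add: det_four_block_mat_upper_right_zero[of _ h _ h])

lemma in_GL_blk_upper: "B \<in> carrier_mat h h \<Longrightarrow> in_GL (h + h) (blk_upper h B)"
  unfolding in_GL_def blk_upper_def by (simp add: det_four_block_mat_lower_left_zero[of _ h _ h])

lemma in_GL_Emat: "in_GL (2^(n-1)) (Emat n)"
proof (induction n rule: Emat.induct)
  case (4 m)
  define n where "n = Suc (Suc (Suc m))"
  define h where "h = (2::nat) ^ Suc m"
  \<comment> \<open>\<open>Emat.induct\<close> offers the hypothesis only in the two branches of \<open>Emat\<close> that recurse.\<close>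
  have "odd n \<Longrightarrow> n mod 4 \<noteq> 0 \<and> (n mod 4 = 1 \<or> n mod 4 \<noteq> 1 \<and> n mod 4 \<noteq> 2)"
    by presburger
  hence IH: "odd n \<Longrightarrow> in_GL h (Emat (Suc (Suc m)))"
    using "4"(1,3)[OF refl refl] unfolding n_def h_def by auto
  have I: "in_GL h (Imat (Suc (Suc m)))\<^sup>T"
    using in_GL_transpose[OF in_GL_Imat[of "Suc (Suc m)"]] by (simp add: h_def)
  have "even h" by (simp add: h_def)
  have "in_GL (h + h) (Emat n)"
  proof (cases "even n")
    case True
    hence "n mod 4 = 0 \<or> n mod 4 = 2" by presburger
    thus ?thesis using I \<open>even h\<close> unfolding n_def Emat.simps(4) Let_def h_def[symmetric]
      by (auto simp del: Imat.simps intro!: in_GL_mult in_GL_blk_diag in_GL_blk_lower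
          in_GL_blk_upper in_GL_one in_GL_sigma in_GL_psi)
  next
    case False
    hence "n mod 4 = 1 \<or> n mod 4 = 3" by presburger
    thus ?thesis using IH[OF False] \<open>even h\<close> unfolding n_def Emat.simps(4) Let_def h_def[symmetric]
      by (auto simp del: Imat.simps intro!: in_GL_mult in_GL_blk_diag in_GL_one in_GL_sigma in_GL_psi)
  qed
  thus ?case by (simp add: n_def h_def mult_2)
qed (auto simp: in_GL_def numeral_2_eq_2)

lemma Emat_carrier: "Emat n \<in> carrier_mat (2^(n-1)) (2^(n-1))"
  using in_GL_Emat unfolding in_GL_def by blast

lemma int_mat_inv:
  assumes "in_GL N A"
  shows "int_mat_inv N A \<in> carrier_mat N N" "A * int_mat_inv N A = 1\<^sub>m N" "int_mat_inv N A * A = 1\<^sub>m N"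
proof -
  from assms have A: "A \<in> carrier_mat N N" and "det A dvd 1" unfolding in_GL_def by auto
  then obtain u where u: "det A * u = 1" by (metis dvdE)
  define B where "B = u \<cdot>\<^sub>m adj_mat A"
  have B: "B \<in> carrier_mat N N" unfolding B_def using adj_mat(1)[OF A] by simp
  have "A * B = (u * det A) \<cdot>\<^sub>m 1\<^sub>m N" "B * A = (u * det A) \<cdot>\<^sub>m 1\<^sub>m N"
    unfolding B_def using adj_mat[OF A] A
    by (simp_all add: mult_smult_distrib[of _ N N] mult_smult_assoc_mat[of _ N N]) (rule eq_matI, simp_all)+
  hence AB: "A * B = 1\<^sub>m N" "B * A = 1\<^sub>m N" using u by (simp_all add: mult.commute)
  have "int_mat_inv N A = B"
    unfolding int_mat_inv_def
  proof (rule the_equality)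
    fix C assume C: "C \<in> carrier_mat N N \<and> A * C = 1\<^sub>m N \<and> C * A = 1\<^sub>m N"
    have "C = C * (A * B)" using C AB by (metis right_mult_one_mat)
    also have "\<dots> = C * A * B" by (rule assoc_mult_mat[symmetric]) (use C A B in auto)
    also have "\<dots> = B" using C B by simp
    finally show "C = B" .
  qed (use B AB in simp)
  thus "int_mat_inv N A \<in> carrier_mat N N" "A * int_mat_inv N A = 1\<^sub>m N" "int_mat_inv N A * A = 1\<^sub>m N"
    using B AB by simp_all
qed

section \<open>\<open>E\<^sub>n\<close> carries \<open>I\<^sub>n\<close> to \<open>\<sigma>\<close> or \<open>\<psi>\<close>\<close>

lemma blk_diag_carrier[simp]:
  "A \<in> carrier_mat h h \<Longrightarrow> D \<in> carrier_mat h h \<Longrightarrow> blk_diag h A D \<in> carrier_mat (h + h) (h + h)"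
  unfolding blk_diag_def by auto

lemma blk_lower_carrier[simp]: "C \<in> carrier_mat h h \<Longrightarrow> blk_lower h C \<in> carrier_mat (h + h) (h + h)"
  unfolding blk_lower_def by auto

lemma blk_upper_carrier[simp]: "B \<in> carrier_mat h h \<Longrightarrow> blk_upper h B \<in> carrier_mat (h + h) (h + h)"
  unfolding blk_upper_def by auto

lemma mat_congr_blk_diag_psi_sigma:
  "even h \<Longrightarrow> mat_congr (blk_diag h (1\<^sub>m h) (psi h)) (four_block_mat (sigma h) (0\<^sub>m h h) (0\<^sub>m h h) (- sigma h))
    = sigma (h + h)"
  unfolding blk_diag_def
  by (simp add: mat_congr_four_block_diag sigma_double) (simp add: mat_congr_def psi_sigma_psi)

lemma mat_congr_blk_diag_sigma_psi:
  "even h \<Longrightarrow> mat_congr (blk_diag h (1\<^sub>m h) (sigma h)) (four_block_mat (psi h) (0\<^sub>m h h) (0\<^sub>m h h) (- psi h))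
    = psi (h + h)"
  unfolding blk_diag_def
  by (simp add: mat_congr_four_block_diag psi_double) (simp add: mat_congr_def sigma_psi_sigma)

lemma mat_congr_unipotent_sigma:
  "mat_congr (blk_upper h (- sigma h))
      (mat_congr (blk_lower h (tau h)) (four_block_mat (0\<^sub>m h h) (1\<^sub>m h) (1\<^sub>m h) (0\<^sub>m h h)))
    = four_block_mat (sigma h) (0\<^sub>m h h) (0\<^sub>m h h) (- sigma h)" if "even h"
proof -
  have "tau h + (tau h)\<^sup>T * 1\<^sub>m h = sigma h" by (simp add: sigma_def)
  moreover have "(- sigma h)\<^sup>T * sigma h + 1\<^sub>m h = 0\<^sub>m h h" "sigma h * - sigma h + 1\<^sub>m h = 0\<^sub>m h h"
    using sigma_mult_sigma[OF that] by (simp_all add: transpose_uminus)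
  ultimately show ?thesis
    unfolding blk_lower_def blk_upper_def
    by (simp add: mat_congr_four_block_lower mat_congr_four_block_upper)
qed

lemma mat_congr_unipotent_psi:
  "mat_congr (blk_upper h (psi h))
      (mat_congr (blk_lower h (tau h)) (four_block_mat (0\<^sub>m h h) (1\<^sub>m h) (- 1\<^sub>m h) (0\<^sub>m h h)))
    = four_block_mat (psi h) (0\<^sub>m h h) (0\<^sub>m h h) (- psi h)" if "even h"
proof -
  have "tau h + (tau h)\<^sup>T * - 1\<^sub>m h = psi h"
    by (rule eq_matI) (auto simp: psi_def)
  moreover have "(psi h)\<^sup>T * psi h + - 1\<^sub>m h = 0\<^sub>m h h" "psi h * psi h + 1\<^sub>m h = 0\<^sub>m h h"
    using psi_mult_psi[OF that] by simp_all
  ultimately show ?thesis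
    unfolding blk_lower_def blk_upper_def
    by (simp add: mat_congr_four_block_lower mat_congr_four_block_upper)
qed

lemma mat_congr_Emat_Imat_even_step:
  assumes n: "n = Suc (Suc (Suc m))" and "even n"
  shows "mat_congr (Emat n) (Imat n) = (if n mod 4 = 0 then sigma (2^(n-1)) else psi (2^(n-1)))"
proof -
  define h where "h = (2::nat) ^ Suc m"
  define J where "J = Imat (Suc (Suc m))"
  let ?D = "blk_diag h (1\<^sub>m h) J\<^sup>T" and ?L = "blk_lower h (tau h)"
  have "even h" and hn: "2^(n-1) = h + h" by (simp_all add: h_def n)
  have J: "J \<in> carrier_mat h h" using Imat_carrier[of "Suc (Suc m)"] by (simp add: J_def h_def)
  have JJ: "J * J\<^sup>T = 1\<^sub>m h" using Imat_mult_transpose[of "Suc (Suc m)"] by (simp add: J_def h_def)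
  have "Suc (Suc m) mod 4 = 0 \<or> Suc (Suc m) mod 4 = 1 \<longleftrightarrow> n mod 4 \<noteq> 0"
    using \<open>even n\<close> unfolding n by presburger
  hence JT: "J\<^sup>T = (if n mod 4 = 0 then - J else J)"
    using transpose_Imat[of "Suc (Suc m)"] by (simp add: J_def)
  have I: "Imat n = four_block_mat (0\<^sub>m h h) J (- J) (0\<^sub>m h h)"
    using \<open>even n\<close> by (simp add: n J_def h_def)
  hence I_carrier: "Imat n \<in> carrier_mat (h + h) (h + h)" using J by simp
  have first: "mat_congr ?D (Imat n) = four_block_mat (0\<^sub>m h h) (1\<^sub>m h) (- (J * J)) (0\<^sub>m h h)"
    unfolding I blk_diag_def
    by (subst mat_congr_four_block_diag[of _ h]) (use J JJ in \<open>auto simp: mat_congr_def\<close>)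
  show ?thesis
  proof (cases "n mod 4 = 0")
    case True
    hence "Emat n = ?D * ?L * blk_upper h (- sigma h) * blk_diag h (1\<^sub>m h) (psi h)"
      by (simp add: n Let_def h_def J_def del: Imat.simps)
    moreover have "- (J * J) = 1\<^sub>m h" using JT JJ J True by simp
    ultimately show ?thesis
      unfolding hn using True J I_carrier first mat_congr_unipotent_sigma[OF \<open>even h\<close>]
        mat_congr_blk_diag_psi_sigma[OF \<open>even h\<close>]
      by (simp add: mat_congr_mult4[of _ "h + h"])
  next
    case False
    hence "Emat n = ?D * ?L * blk_upper h (psi h) * blk_diag h (1\<^sub>m h) (sigma h)"
      using \<open>even n\<close> by (simp add: n Let_def h_def J_def del: Imat.simps) presburger
    moreover have "- (J * J) = - 1\<^sub>m h" using JT JJ J False by simp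
    ultimately show ?thesis
      unfolding hn using False J I_carrier first mat_congr_unipotent_psi[OF \<open>even h\<close>]
        mat_congr_blk_diag_sigma_psi[OF \<open>even h\<close>]
      by (simp add: mat_congr_mult4[of _ "h + h"])
  qed
qed

lemma mat_congr_Emat_Imat_even:
  assumes "2 \<le> n" "even n"
  shows "mat_congr (Emat n) (Imat n) = (if n mod 4 = 0 then sigma (2^(n-1)) else psi (2^(n-1)))"
proof (cases "n = 2")
  case True
  thus ?thesis by (simp add: mat_congr_def numeral_2_eq_2)
      (rule eq_matI, auto simp: psi_index pair_partner_def pair_sign_def less_Suc_eq)
next
  case False
  then obtain m where "n = Suc (Suc (Suc m))"
    using assms by (metis add_2_eq_Suc le_neq_implies_less less_imp_Suc_add)
  thus ?thesis using mat_congr_Emat_Imat_even_step assms(2) by blast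
qed

lemma mat_congr_Emat_Imat_odd:
  assumes n: "n = Suc (Suc (Suc m))" and "odd n"
  shows "mat_congr (Emat n) (Imat n) = (if n mod 4 = 1 then sigma (2^(n-1)) else psi (2^(n-1)))"
proof -
  define h where "h = (2::nat) ^ Suc m"
  define F where "F = Emat (Suc (Suc m))"
  define J where "J = Imat (Suc (Suc m))"
  define X where "X = (if n mod 4 = 1 then psi h else sigma h)"
  define S where "S = mat_congr F J"
  have "even h" and hn: "2^(n-1) = h + h" by (simp_all add: h_def n)
  have F: "F \<in> carrier_mat h h" using Emat_carrier[of "Suc (Suc m)"] by (simp add: F_def h_def)
  have J: "J \<in> carrier_mat h h" using Imat_carrier[of "Suc (Suc m)"] by (simp add: J_def h_def)
  have S: "S = (if n mod 4 = 1 then sigma h else psi h)"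
  proof -
    have "Suc (Suc m) mod 4 = 0 \<longleftrightarrow> n mod 4 = 1" using \<open>odd n\<close> unfolding n by presburger
    thus ?thesis using mat_congr_Emat_Imat_even[of "Suc (Suc m)"] \<open>odd n\<close>
      by (simp add: S_def F_def J_def h_def n)
  qed
  have "n mod 4 = 1 \<or> n mod 4 = 3" using \<open>odd n\<close> by presburger
  hence E: "Emat n = blk_diag h F F * blk_diag h (1\<^sub>m h) X"
    by (auto simp: n Let_def h_def F_def X_def simp del: Imat.simps)
  have I: "Imat n = four_block_mat J (0\<^sub>m h h) (0\<^sub>m h h) (- J)"
    using \<open>odd n\<close> by (simp add: n J_def h_def)
  have "mat_congr (blk_diag h F F) (Imat n) = four_block_mat S (0\<^sub>m h h) (0\<^sub>m h h) (- S)"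
    unfolding I blk_diag_def S_def using F J by (simp add: mat_congr_four_block_diag mat_congr_uminus)
  moreover have "Imat n \<in> carrier_mat (h + h) (h + h)" using Imat_carrier[of n] unfolding hn .
  ultimately have "mat_congr (Emat n) (Imat n)
      = mat_congr (blk_diag h (1\<^sub>m h) X) (four_block_mat S (0\<^sub>m h h) (0\<^sub>m h h) (- S))"
    unfolding E using F by (simp add: mat_congr_mult[of _ "h + h"] X_def)
  thus ?thesis
    unfolding hn S X_def using mat_congr_blk_diag_psi_sigma[OF \<open>even h\<close>] mat_congr_blk_diag_sigma_psi[OF \<open>even h\<close>]
    by simp
qed

section \<open>The morphisms \<open>\<Psi>\<^sub>n\<close>\<close>

text \<open>The algebra behind the even case: \<open>I\<^sup>T A I = B\<close> and \<open>B A\<^sup>T = 1\<close> for an orthogonal \<open>I\<close>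
  give \<open>A I A\<^sup>T = I\<close>, i.e. \<open>A\<^sup>T\<close> preserves the form \<open>I\<close>; conjugating by \<open>E\<close> moves this to \<open>E\<^sup>T I E\<close>.\<close>

lemma mat_congr_conj_transpose:
  fixes A B E E' I :: "'a::comm_ring_1 mat"
  assumes c: "A \<in> carrier_mat N N" "B \<in> carrier_mat N N" "E \<in> carrier_mat N N" "E' \<in> carrier_mat N N"
    "I \<in> carrier_mat N N"
    and EE': "E * E' = 1\<^sub>m N" and II: "I * I\<^sup>T = 1\<^sub>m N"
    and AI: "mat_congr I A = B" and BA: "B * A\<^sup>T = 1\<^sub>m N"
  shows "mat_congr (E' * A\<^sup>T * E) (mat_congr E I) = mat_congr E I"
proof -
  have "I * (I\<^sup>T * (A * I)) = (I * I\<^sup>T) * (A * I)"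
    by (rule assoc_mult_mat[symmetric]) (use c in auto)
  hence "A * I = I * B"
    using AI c II unfolding mat_congr_def by simp
  have "A * (I * A\<^sup>T) = (A * I) * A\<^sup>T"
    by (rule assoc_mult_mat[symmetric]) (use c in auto)
  also have "\<dots> = I * (B * A\<^sup>T)"
    unfolding \<open>A * I = I * B\<close> by (rule assoc_mult_mat) (use c in auto)
  finally have A_I: "mat_congr A\<^sup>T I = I"
    using c BA unfolding mat_congr_def by simp
  have "mat_congr E' (mat_congr E I) = I"
    using mat_congr_mult[OF c(3,4,5)] EE' c by simp
  moreover have AT: "A\<^sup>T \<in> carrier_mat N N" using c by simp
  ultimately show ?thesis
    using mat_congr_mult[OF mult_carrier_mat[OF c(4) AT] c(3)] mat_congr_mult[OF c(4) AT] c A_I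
    by simp
qed

text \<open>The algebra behind the odd case: \<open>I\<^sup>T A I = A\<^sup>T\<close> forces \<open>A I\<close> to be symmetric or
  antisymmetric according to whether \<open>I\<close> is.\<close>

lemma transpose_mult_eq_smult:
  fixes A I :: "'a::comm_ring_1 mat"
  assumes c: "A \<in> carrier_mat N N" "I \<in> carrier_mat N N"
    and AI: "mat_congr I A = A\<^sup>T" and II: "I\<^sup>T * I\<^sup>T = c \<cdot>\<^sub>m 1\<^sub>m N"
  shows "(A * I)\<^sup>T = c \<cdot>\<^sub>m (A * I)"
proof -
  have "(A * I)\<^sup>T = I\<^sup>T * (I\<^sup>T * (A * I))"
    using AI c unfolding mat_congr_def by (simp add: transpose_mult[of _ N N _ N])
  also have "\<dots> = (I\<^sup>T * I\<^sup>T) * (A * I)"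
    by (rule assoc_mult_mat[symmetric]) (use c in auto)
  also have "\<dots> = c \<cdot>\<^sub>m (A * I)"
    unfolding II using c by (simp add: smult_one_mat_mult[of _ N N])
  finally show ?thesis .
qed

lemma Psi_even_isometry:
  fixes x y :: "nat \<Rightarrow> 'a::comm_ring_1"
  assumes n: "2 \<le> n" "even n" and xy: "(\<Sum>i<n. x i * y i) = 1"
  defines "S \<equiv> if n mod 4 = 0 then sigma (2^(n-1)) else psi (2^(n-1))"
  shows "(Psi n x y)\<^sup>T * ofm S * Psi n x y = ofm S"
proof -
  define N where "N = (2::nat)^(n-1)"
  define E where "E = (ofm (Emat n) :: 'a mat)"
  define E' where "E' = (ofm (int_mat_inv N (Emat n)) :: 'a mat)"
  define I where "I = (ofm (Imat n) :: 'a mat)"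
  obtain m where m: "n = Suc m" using n by (cases n) auto
  note inv = int_mat_inv[OF in_GL_Emat[of n, folded N_def]]
  have Emat: "Emat n \<in> carrier_mat N N" using Emat_carrier[of n] by (simp add: N_def)
  have c: "alpha n x y \<in> carrier_mat N N" "alpha n y x \<in> carrier_mat N N" "E \<in> carrier_mat N N"
    "E' \<in> carrier_mat N N" "I \<in> carrier_mat N N"
    using alpha_carrier Imat_carrier[of n] Emat inv by (simp_all add: N_def E_def E'_def I_def)
  have "E * E' = 1\<^sub>m N"
    unfolding E_def E'_def ofm_mult[OF Emat inv(1), symmetric] inv(2) by simp
  moreover have "I * I\<^sup>T = 1\<^sub>m N" using ofm_Imat_mult_transpose by (simp add: I_def N_def)
  moreover have "mat_congr I (alpha n x y) = alpha n y x"
    using alpha_mat_congr_Imat[of "n - 1" x y] n by (simp add: I_def m)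
  moreover have "alpha n y x * (alpha n x y)\<^sup>T = 1\<^sub>m N"
    using alpha_swap_mult_transpose[OF xy] n by (simp add: N_def)
  ultimately have "mat_congr (E' * (alpha n x y)\<^sup>T * E) (mat_congr E I) = mat_congr E I"
    by (rule mat_congr_conj_transpose[OF c])
  moreover have "Psi n x y = E' * (alpha n x y)\<^sup>T * E"
    using n by (simp add: Psi_def E_def E'_def N_def)
  moreover have "ofm S = mat_congr E I"
    using ofm_mat_congr[OF Emat, of "Imat n"] mat_congr_Emat_Imat_even[OF n] Imat_carrier[of n]
    by (simp add: S_def E_def I_def N_def)
  ultimately show ?thesis
    using c by (simp add: mat_congr_assoc[of _ N])
qed

lemma Psi_odd_transpose:
  fixes x y :: "nat \<Rightarrow> 'a::comm_ring_1"
  assumes n: "2 \<le> n" "odd n" and xy: "(\<Sum>i<n. x i * y i) = 1"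
  shows "(Psi n x y)\<^sup>T = (if n mod 4 = 1 then Psi n x y else - Psi n x y)"
proof -
  define N where "N = (2::nat)^(n-1)"
  define E where "E = (ofm (Emat n) :: 'a mat)"
  define I where "I = (ofm (Imat n) :: 'a mat)"
  define A where "A = alpha n x y"
  define c :: 'a where "c = (if n mod 4 = 1 then 1 else -1)"
  obtain m where m: "n = Suc m" using n by (cases n) auto
  have E: "E \<in> carrier_mat N N" using Emat_carrier[of n] by (simp add: E_def N_def)
  have I: "I \<in> carrier_mat N N" using Imat_carrier[of n] by (simp add: I_def N_def)
  have A: "A \<in> carrier_mat N N" using alpha_carrier by (simp add: A_def N_def)
  have "n mod 4 = 0 \<or> n mod 4 = 1 \<longleftrightarrow> n mod 4 = 1" using \<open>odd n\<close> by presburger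
  hence IT: "I\<^sup>T = c \<cdot>\<^sub>m I"
    using transpose_Imat[of n] by (simp add: I_def c_def ofm_transpose[symmetric])
  have "I\<^sup>T * (c \<cdot>\<^sub>m I) = c \<cdot>\<^sub>m (I\<^sup>T * I)"
    using I by (simp add: mult_smult_distrib[of _ N N])
  moreover have "I\<^sup>T * I = 1\<^sub>m N"
    unfolding I_def N_def by (rule ofm_transpose_Imat_mult)
  ultimately have "I\<^sup>T * I\<^sup>T = c \<cdot>\<^sub>m 1\<^sub>m N"
    unfolding IT[symmetric] by simp
  moreover have "mat_congr I A = A\<^sup>T"
    using alpha_mat_congr_Imat[of "n - 1" x y] n by (simp add: I_def A_def m)
  ultimately have AI: "(A * I)\<^sup>T = c \<cdot>\<^sub>m (A * I)"
    by (intro transpose_mult_eq_smult[OF A I])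
  have Psi: "Psi n x y = mat_congr E (A * I)"
    using \<open>odd n\<close> E A I
    by (simp add: Psi_def E_def I_def A_def assoc_mult_mat[of _ N N _ N _ N] mat_congr_def)
  have "(Psi n x y)\<^sup>T = c \<cdot>\<^sub>m Psi n x y"
    unfolding Psi mat_congr_transpose[OF E mult_carrier_mat[OF A I], symmetric] AI
    using E A I by (simp add: mat_congr_smult)
  thus ?thesis by (simp add: c_def)
qed

lemma in_GL_Psi:
  fixes x y :: "nat \<Rightarrow> 'a::comm_ring_1"
  assumes n: "2 \<le> n" and xy: "(\<Sum>i<n. x i * y i) = 1"
  shows "in_GL (2^(n-1)) (Psi n x y)"
proof -
  define N where "N = (2::nat)^(n-1)"
  have E: "in_GL N (Emat n)" and A: "in_GL N (alpha n x y)"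
    using in_GL_Emat in_GL_alpha[OF xy] n by (simp_all add: N_def)
  note inv = int_mat_inv[OF E]
  have "in_GL N (int_mat_inv N (Emat n))"
    using in_GL_if_mult_eq_one(2)[OF _ inv(1,2)] E by (simp add: in_GL_def)
  thus ?thesis
    unfolding Psi_def N_def[symmetric] using E A in_GL_Imat[of n, folded N_def]
    by (auto intro!: in_GL_mult in_GL_ofm in_GL_transpose)
qed

lemma Psi_e1_even:
  assumes "2 \<le> n" "even n"
  shows "Psi n e1 e1 = (1\<^sub>m (2^(n-1)) :: 'a::comm_ring_1 mat)"
proof -
  define N where "N = (2::nat)^(n-1)"
  note inv = int_mat_inv[OF in_GL_Emat[of n, folded N_def]]
  have "alpha n e1 e1 = (1\<^sub>m N :: 'a mat)" using alpha_n_e1[of n] assms by (simp add: N_def)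
  hence "Psi n e1 e1 = (ofm (int_mat_inv N (Emat n)) * ofm (Emat n) :: 'a mat)"
    unfolding Psi_def N_def[symmetric] using assms inv(1) by simp
  also have "\<dots> = 1\<^sub>m N"
    unfolding ofm_mult[OF inv(1) Emat_carrier[of n, folded N_def], symmetric] inv(3) by simp
  finally show ?thesis by (simp add: N_def)
qed

lemma Psi_e1_odd:
  assumes "2 \<le> n" "odd n"
  shows "Psi n e1 e1 = (ofm (if n mod 4 = 1 then sigma (2^(n-1)) else psi (2^(n-1))) :: 'a::comm_ring_1 mat)"
proof -
  define N where "N = (2::nat)^(n-1)"
  have E: "Emat n \<in> carrier_mat N N" and I: "Imat n \<in> carrier_mat N N"
    using Emat_carrier Imat_carrier by (simp_all add: N_def)
  have "n = Suc (Suc (Suc (n - 3)))" using assms by presburger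
  hence congr: "mat_congr (Emat n) (Imat n) = (if n mod 4 = 1 then sigma N else psi N)"
    using mat_congr_Emat_Imat_odd \<open>odd n\<close> unfolding N_def by blast
  have "alpha n e1 e1 = (1\<^sub>m N :: 'a mat)" using alpha_n_e1[of n] assms by (simp add: N_def)
  hence "Psi n e1 e1 = (ofm (Emat n))\<^sup>T * ofm (Imat n) * (ofm (Emat n) :: 'a mat)"
    unfolding Psi_def N_def[symmetric] using assms E by simp
  also have "\<dots> = mat_congr (ofm (Emat n)) (ofm (Imat n))"
    by (rule mat_congr_assoc) (use E I in simp_all)
  also have "\<dots> = ofm (mat_congr (Emat n) (Imat n))"
    by (rule ofm_mat_congr[OF E I, symmetric])
  finally show ?thesis unfolding N_def[symmetric] congr by simp
qed

lemma in_S_Psi1: "t dvd 1 \<Longrightarrow> in_S 2 (Psi1 (t::'a::comm_ring_1))"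
proof -
  assume t: "t dvd 1"
  have c: "Psi1 t \<in> carrier_mat 2 2" unfolding Psi1_def by auto
  have "det (Psi1 t) = prod_list (diag_mat (Psi1 t))"
    by (rule det_upper_triangular[OF _ c]) (auto simp: Psi1_def)
  also have "\<dots> = - t" unfolding Psi1_def by (simp add: diag_mat_def numeral_2_eq_2)
  finally have "det (Psi1 t) dvd 1" using t by simp
  moreover have "(Psi1 t)\<^sup>T = Psi1 t" unfolding Psi1_def by (rule eq_matI) auto
  ultimately show ?thesis unfolding in_S_def in_GL_def using c by simp
qed

theorem proposition3p6:
  fixes \<phi> :: "'k::field \<Rightarrow> 'r::comm_ring_1"
  assumes char_not_2: "(2::'k) \<noteq> 0"
    and alg_one: "\<phi> 1 = 1"
    and alg_add: "\<And>a b. \<phi> (a + b) = \<phi> a + \<phi> b"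
    and alg_mult: "\<And>a b. \<phi> (a * b) = \<phi> a * \<phi> b"
  shows "(\<forall>t::'r. t dvd 1 \<longrightarrow> in_S 2 (Psi1 t))
    \<and> (\<forall>n::nat. n \<ge> 2 \<longrightarrow>
        (n mod 4 = 0 \<longrightarrow>
           (\<forall>x y::nat \<Rightarrow> 'r. (\<Sum>i<n. x i * y i) = 1 \<longrightarrow> in_O (2^(n-1)) (Psi n x y))
           \<and> Psi n (e1::nat \<Rightarrow> 'r) e1 = 1\<^sub>m (2^(n-1)))
      \<and> (n mod 4 = 1 \<longrightarrow>
           (\<forall>x y::nat \<Rightarrow> 'r. (\<Sum>i<n. x i * y i) = 1 \<longrightarrow> in_S (2^(n-1)) (Psi n x y))
           \<and> Psi n (e1::nat \<Rightarrow> 'r) e1 = ofm (sigma (2^(n-1))))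
      \<and> (n mod 4 = 2 \<longrightarrow>
           (\<forall>x y::nat \<Rightarrow> 'r. (\<Sum>i<n. x i * y i) = 1 \<longrightarrow> in_Sp (2^(n-1)) (Psi n x y))
           \<and> Psi n (e1::nat \<Rightarrow> 'r) e1 = 1\<^sub>m (2^(n-1)))
      \<and> (n mod 4 = 3 \<longrightarrow>
           (\<forall>x y::nat \<Rightarrow> 'r. (\<Sum>i<n. x i * y i) = 1 \<longrightarrow> in_A (2^(n-1)) (Psi n x y))
           \<and> Psi n (e1::nat \<Rightarrow> 'r) e1 = ofm (psi (2^(n-1)))))"
proof (intro conjI allI impI)
  fix t :: 'r assume "t dvd 1" thus "in_S 2 (Psi1 t)" by (rule in_S_Psi1)
next
  fix n :: nat
  assume n: "2 \<le> n"
  have even_n: "n mod 4 = 0 \<Longrightarrow> even n" "n mod 4 = 2 \<Longrightarrow> even n"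
    and odd_n: "n mod 4 = 1 \<Longrightarrow> odd n" "n mod 4 = 3 \<Longrightarrow> odd n"
    by presburger+
  show "in_O (2^(n-1)) (Psi n x y)" if "n mod 4 = 0" "(\<Sum>i<n. x i * y i) = 1" for x y :: "nat \<Rightarrow> 'r"
    using in_GL_Psi[OF n that(2)] Psi_even_isometry[OF n even_n(1) that(2)] that(1)
    unfolding in_O_def by simp
  show "in_Sp (2^(n-1)) (Psi n x y)" if "n mod 4 = 2" "(\<Sum>i<n. x i * y i) = 1" for x y :: "nat \<Rightarrow> 'r"
    using in_GL_Psi[OF n that(2)] Psi_even_isometry[OF n even_n(2) that(2)] that(1)
    unfolding in_Sp_def by simp
  show "in_S (2^(n-1)) (Psi n x y)" if "n mod 4 = 1" "(\<Sum>i<n. x i * y i) = 1" for x y :: "nat \<Rightarrow> 'r"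
    using in_GL_Psi[OF n that(2)] Psi_odd_transpose[OF n odd_n(1) that(2)] that(1)
    unfolding in_S_def by simp
  show "in_A (2^(n-1)) (Psi n x y)" if "n mod 4 = 3" "(\<Sum>i<n. x i * y i) = 1" for x y :: "nat \<Rightarrow> 'r"
    using in_GL_Psi[OF n that(2)] Psi_odd_transpose[OF n odd_n(2) that(2)] that(1)
    unfolding in_A_def by simp
  show "Psi n e1 e1 = (1\<^sub>m (2^(n-1)) :: 'r mat)" if "n mod 4 = 0"
    using Psi_e1_even[OF n even_n(1)[OF that]] .
  show "Psi n e1 e1 = (1\<^sub>m (2^(n-1)) :: 'r mat)" if "n mod 4 = 2"
    using Psi_e1_even[OF n even_n(2)[OF that]] .
  show "Psi n e1 e1 = (ofm (sigma (2^(n-1))) :: 'r mat)" if "n mod 4 = 1"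
    using Psi_e1_odd[OF n odd_n(1)[OF that]] that by simp
  show "Psi n e1 e1 = (ofm (psi (2^(n-1))) :: 'r mat)" if "n mod 4 = 3"
    using Psi_e1_odd[OF n odd_n(2)[OF that]] that by simp
qed

end
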